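(* A triple $(A_1,A_2,A_3)\in V_3$ is similar to an upper triangular $3$-matrix if and only if $\sigma_{12}=\sigma_{13}=\sigma_{23}=\Delta_{123}=0$.
   Context: $V_3=(M_{2\times2}(\mathbb{C}))^{\times 3}$ with $GL(2,\mathbb{C})$ acting by simultaneous conjugation; similar means same orbit; upper triangular $3$-matrix means all components upper triangular. With $t_j=\mathsf{tr}(A_j)$, $t_{jk}=\mathsf{tr}(A_jA_k)$, $t_{jkl}=\mathsf{tr}(A_jA_kA_l)$, define $\tau_{jk}=t_{jk}-\tfrac12t_jt_k$, $\sigma_{jk}=\tau_{jk}^2-\tau_{jj}\tau_{kk}$ and $\Delta_{jkl}=(t_{jkl}-t_{lkj})^2$. *)

theory Defs
  imports "HOL-Analysis.Analysis"
begin

type_synonym cmat2 = "complex^2^2"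

definition upper_tri2 :: "cmat2 \<Rightarrow> bool" where
  "upper_tri2 M \<longleftrightarrow> M $ 2 $ 1 = 0"

definition similar3 :: "cmat2 \<times> cmat2 \<times> cmat2 \<Rightarrow> cmat2 \<times> cmat2 \<times> cmat2 \<Rightarrow> bool" where
  "similar3 A B \<longleftrightarrow> (\<exists>P::cmat2. invertible P \<and>
     fst B = P ** fst A ** matrix_inv P \<and>
     fst (snd B) = P ** fst (snd A) ** matrix_inv P \<and>
     snd (snd B) = P ** snd (snd A) ** matrix_inv P)"

definition upper_tri3 :: "cmat2 \<times> cmat2 \<times> cmat2 \<Rightarrow> bool" where
  "upper_tri3 B \<longleftrightarrow> upper_tri2 (fst B) \<and> upper_tri2 (fst (snd B)) \<and> upper_tri2 (snd (snd B))"

definition tau :: "cmat2 \<Rightarrow> cmat2 \<Rightarrow> complex" where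
  "tau X Y = trace (X ** Y) - trace X * trace Y / 2"

definition sigma :: "cmat2 \<Rightarrow> cmat2 \<Rightarrow> complex" where
  "sigma X Y = (tau X Y)^2 - tau X X * tau Y Y"

definition Delta :: "cmat2 \<Rightarrow> cmat2 \<Rightarrow> cmat2 \<Rightarrow> complex" where
  "Delta X Y Z = (trace (X ** Y ** Z) - trace (Z ** Y ** X))^2"

end

theory Submission
  imports Defs
begin

text \<open>
  For \<open>v = (p, q)\<close> the binary quadratic form \<open>det (v, A v)\<close> vanishes at \<open>v \<noteq> 0\<close> exactly
  when \<open>v\<close> is an eigenvector of \<open>A\<close>; conjugating \<open>v\<close> to the first basis vector shows that a
  triple is similar to an upper triangular one iff its three forms have a common nontrivial
  zero. In the coefficients of these forms, \<open>\<sigma>\<^sub>j\<^sub>k\<close> is the resultant of the \<open>j\<close>-th and \<open>k\<close>-th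
  form and \<open>\<Delta>\<^sub>1\<^sub>2\<^sub>3\<close> is the squared determinant of the three coefficient vectors. Over \<open>\<complex>\<close> a
  nonzero form splits into linear factors and the resultant is the product of the values of
  the other form at their zeros, so a vanishing resultant yields a common zero of two forms;
  linear dependence of the coefficient vectors then makes it a zero of the third.
\<close>

definition quad_form :: "complex \<Rightarrow> complex \<Rightarrow> complex \<Rightarrow> complex \<Rightarrow> complex \<Rightarrow> complex" where
  "quad_form a b c p q = a * p\<^sup>2 + b * p * q + c * q\<^sup>2"

definition quad_resultant ::
  "complex \<Rightarrow> complex \<Rightarrow> complex \<Rightarrow> complex \<Rightarrow> complex \<Rightarrow> complex \<Rightarrow> complex" where
  "quad_resultant a b c a' b' c' = (a * c' - c * a')\<^sup>2 - (a * b' - b * a') * (b * c' - c * b')"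

lemma quad_form_factors:
  fixes a b c :: complex
  assumes "(a, b, c) \<noteq> (0, 0, 0)"
  obtains \<alpha> \<beta> \<gamma> \<delta> where "a = \<beta> * \<delta>" "b = - (\<beta> * \<gamma> + \<alpha> * \<delta>)" "c = \<alpha> * \<gamma>"
    "(\<alpha>, \<beta>) \<noteq> (0, 0)" "(\<gamma>, \<delta>) \<noteq> (0, 0)"
proof (cases "a = 0")
  case True
  then show ?thesis
    using assms by (intro that[where \<alpha> = "-1" and \<beta> = 0 and \<gamma> = "-c" and \<delta> = b]) auto
next
  case False
  define s where "s = csqrt (b\<^sup>2 - 4 * a * c)"
  have "s\<^sup>2 = b\<^sup>2 - 4 * a * c" unfolding s_def by simp
  then have "c = a * ((- b + s) / (2 * a)) * ((- b - s) / (2 * a))"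
    using False by (simp add: field_simps power2_eq_square) algebra
  then show ?thesis
    using False by (intro that[where \<alpha> = "a * ((- b + s) / (2 * a))" and \<beta> = a
        and \<gamma> = "(- b - s) / (2 * a)" and \<delta> = 1])
      (auto simp: field_simps)
qed

lemma quad_form_nontrivial_zero: "\<exists>p q. (p, q) \<noteq> (0, 0) \<and> quad_form a b c p q = 0"
proof (cases "(a, b, c) = (0, 0, 0)")
  case True
  then show ?thesis by (auto simp: quad_form_def)
next
  case False
  then obtain \<alpha> \<beta> \<gamma> \<delta> where "a = \<beta> * \<delta>" "b = - (\<beta> * \<gamma> + \<alpha> * \<delta>)" "c = \<alpha> * \<gamma>"
    and "(\<alpha>, \<beta>) \<noteq> (0, 0)"
    by (rule quad_form_factors)
  moreover from this(1-3) have "quad_form a b c \<alpha> \<beta> = 0"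
    unfolding quad_form_def by algebra
  ultimately show ?thesis by blast
qed

lemma quad_resultant_of_factors:
  "quad_resultant (\<beta> * \<delta>) (- (\<beta> * \<gamma> + \<alpha> * \<delta>)) (\<alpha> * \<gamma>) a' b' c' =
     quad_form a' b' c' \<alpha> \<beta> * quad_form a' b' c' \<gamma> \<delta>"
  unfolding quad_resultant_def quad_form_def by algebra

lemma quad_resultant_eq_0_imp_common_zero:
  assumes "quad_resultant a b c a' b' c' = 0"
  shows "\<exists>p q. (p, q) \<noteq> (0, 0) \<and> quad_form a b c p q = 0 \<and> quad_form a' b' c' p q = 0"
proof (cases "(a, b, c) = (0, 0, 0)")
  case True
  then show ?thesis using quad_form_nontrivial_zero[of a' b' c'] by (auto simp: quad_form_def)
next
  case False
  then obtain \<alpha> \<beta> \<gamma> \<delta> where f: "a = \<beta> * \<delta>" "b = - (\<beta> * \<gamma> + \<alpha> * \<delta>)" "c = \<alpha> * \<gamma>"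
    and nz: "(\<alpha>, \<beta>) \<noteq> (0, 0)" "(\<gamma>, \<delta>) \<noteq> (0, 0)"
    by (rule quad_form_factors)
  have "quad_form a b c \<alpha> \<beta> = 0" "quad_form a b c \<gamma> \<delta> = 0"
    unfolding f quad_form_def by algebra+
  moreover have "quad_form a' b' c' \<alpha> \<beta> = 0 \<or> quad_form a' b' c' \<gamma> \<delta> = 0"
    using assms quad_resultant_of_factors unfolding f by simp
  ultimately show ?thesis using nz by blast
qed

lemma quad_form_eq_0_if_proportional:
  assumes "(a, b, c) \<noteq> (0, 0, 0)"
    and "a * b' = b * a'" "a * c' = c * a'" "b * c' = c * b'"
    and "quad_form a b c p q = 0"
  shows "quad_form a' b' c' p q = 0"
proof -
  have "a * quad_form a' b' c' p q = 0" "b * quad_form a' b' c' p q = 0"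
    "c * quad_form a' b' c' p q = 0"
    using assms(2-5) unfolding quad_form_def by algebra+
  then show ?thesis using assms(1) by auto
qed

lemma quad_form_eq_0_if_dependent:
  assumes "(b1 * c2 - c1 * b2, c1 * a2 - a1 * c2, a1 * b2 - b1 * a2) \<noteq> (0, 0, 0)"
    and "a1 * (b2 * c3 - c2 * b3) - b1 * (a2 * c3 - c2 * a3) + c1 * (a2 * b3 - b2 * a3) = 0"
    and "quad_form a1 b1 c1 p q = 0" "quad_form a2 b2 c2 p q = 0"
  shows "quad_form a3 b3 c3 p q = 0"
proof -
  have "(b1 * c2 - c1 * b2) * quad_form a3 b3 c3 p q = 0"
    "(c1 * a2 - a1 * c2) * quad_form a3 b3 c3 p q = 0"
    "(a1 * b2 - b1 * a2) * quad_form a3 b3 c3 p q = 0"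
    using assms(2-4) unfolding quad_form_def by algebra+
  then show ?thesis using assms(1) by auto
qed

lemma common_zero_of_three_quad_forms:
  assumes r12: "quad_resultant a1 b1 c1 a2 b2 c2 = 0"
    and r13: "quad_resultant a1 b1 c1 a3 b3 c3 = 0"
    and r23: "quad_resultant a2 b2 c2 a3 b3 c3 = 0"
    and det: "a1 * (b2 * c3 - c2 * b3) - b1 * (a2 * c3 - c2 * a3) + c1 * (a2 * b3 - b2 * a3) = 0"
  shows "\<exists>p q. (p, q) \<noteq> (0, 0) \<and> quad_form a1 b1 c1 p q = 0 \<and> quad_form a2 b2 c2 p q = 0
    \<and> quad_form a3 b3 c3 p q = 0"
proof (cases "(b1 * c2 - c1 * b2, c1 * a2 - a1 * c2, a1 * b2 - b1 * a2) = (0, 0, 0)")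
  case False
  with quad_resultant_eq_0_imp_common_zero[OF r12] quad_form_eq_0_if_dependent[OF _ det]
  show ?thesis by blast
next
  case parallel: True
  show ?thesis
  proof (cases "(a1, b1, c1) = (0, 0, 0)")
    case True
    with quad_resultant_eq_0_imp_common_zero[OF r23] show ?thesis
      by (auto simp: quad_form_def)
  next
    case False
    have "a1 * b2 = b1 * a2" "a1 * c2 = c1 * a2" "b1 * c2 = c1 * b2"
      using parallel by auto
    with quad_resultant_eq_0_imp_common_zero[OF r13] quad_form_eq_0_if_proportional[OF False]
    show ?thesis by blast
  qed
qed

lemma matrix_mult_2_nth:
  "((M :: 'a::semiring_1^2^'m) ** (N :: 'a^'n^2)) $ i $ j = M$i$1 * N$1$j + M$i$2 * N$2$j"
  by (simp add: matrix_matrix_mult_def sum_2)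

lemma trace_2: "trace (M :: 'a::semiring_1^2^2) = M$1$1 + M$2$2"
  by (simp add: trace_def sum_2)

lemma matrix_inv_left:
  assumes "invertible A"
  shows "matrix_inv A ** A = mat 1"
  using someI_ex[OF assms[unfolded invertible_def]] by (simp add: matrix_inv_def)

lemma matrix_inv_unique:
  fixes A :: "'a::semiring_1^'n^'m"
  assumes "A ** B = mat 1" "B ** A = mat 1"
  shows "invertible A" "matrix_inv A = B"
proof -
  show inv: "invertible A" using assms unfolding invertible_def by blast
  have "matrix_inv A = matrix_inv A ** (A ** B)" using assms(1) by simp
  also have "\<dots> = B" using matrix_inv_left[OF inv] by (metis matrix_mul_assoc matrix_mul_lid)
  finally show "matrix_inv A = B" .
qed

lemma trace_similar:
  fixes P :: "'a::comm_semiring_1^'n^'n"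
  assumes "invertible P"
  shows "trace (P ** X ** matrix_inv P) = trace X"
proof -
  have "trace (P ** X ** matrix_inv P) = trace (matrix_inv P ** (P ** X))"
    by (rule trace_mul_sym)
  also have "\<dots> = trace X"
    using matrix_inv_left[OF assms] by (metis matrix_mul_assoc matrix_mul_lid)
  finally show ?thesis .
qed

lemma matrix_mult_similar:
  fixes P :: "'a::semiring_1^'n^'n"
  assumes "invertible P"
  shows "(P ** X ** matrix_inv P) ** (P ** Y ** matrix_inv P) = P ** (X ** Y) ** matrix_inv P"
proof -
  have "(P ** X ** matrix_inv P) ** (P ** Y ** matrix_inv P) =
      P ** X ** (matrix_inv P ** P) ** Y ** matrix_inv P"
    by (simp add: matrix_mul_assoc)
  also have "\<dots> = P ** (X ** Y) ** matrix_inv P"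
    by (simp add: matrix_inv_left[OF assms] matrix_mul_assoc)
  finally show ?thesis .
qed

lemma sigma_similar:
  "invertible P \<Longrightarrow> sigma (P ** X ** matrix_inv P) (P ** Y ** matrix_inv P) = sigma X Y"
  by (simp add: sigma_def tau_def trace_similar matrix_mult_similar)

lemma Delta_similar:
  "invertible P \<Longrightarrow>
    Delta (P ** X ** matrix_inv P) (P ** Y ** matrix_inv P) (P ** Z ** matrix_inv P) = Delta X Y Z"
  by (simp add: Delta_def trace_similar matrix_mult_similar)

text \<open>\<open>eigen_form A p q = det (v, A v)\<close> for \<open>v = (p, q)\<close>.\<close>

definition eigen_form :: "cmat2 \<Rightarrow> complex \<Rightarrow> complex \<Rightarrow> complex" where
  "eigen_form A = quad_form (A$2$1) (A$2$2 - A$1$1) (- A$1$2)"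

lemma sigma_eq_quad_resultant:
  "sigma A B = quad_resultant (A$2$1) (A$2$2 - A$1$1) (- A$1$2) (B$2$1) (B$2$2 - B$1$1) (- B$1$2)"
  unfolding sigma_def tau_def quad_resultant_def trace_2 matrix_mult_2_nth
  by (simp add: field_simps power2_eq_square)

lemma sigma_upper_tri2: "upper_tri2 A \<Longrightarrow> upper_tri2 B \<Longrightarrow> sigma A B = 0"
  by (simp add: upper_tri2_def sigma_eq_quad_resultant quad_resultant_def)

lemma Delta_upper_tri2:
  "upper_tri2 A \<Longrightarrow> upper_tri2 B \<Longrightarrow> upper_tri2 C \<Longrightarrow> Delta A B C = 0"
  unfolding upper_tri2_def Delta_def trace_2 matrix_mult_2_nth by algebra

lemma eigen_forms_common_zero:
  assumes "sigma A B = 0" "sigma A C = 0" "sigma B C = 0" "Delta A B C = 0"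
  shows "\<exists>p q. (p, q) \<noteq> (0, 0) \<and>
    eigen_form A p q = 0 \<and> eigen_form B p q = 0 \<and> eigen_form C p q = 0"
  unfolding eigen_form_def
proof (rule common_zero_of_three_quad_forms)
  show "quad_resultant (A$2$1) (A$2$2 - A$1$1) (- A$1$2) (B$2$1) (B$2$2 - B$1$1) (- B$1$2) = 0"
    "quad_resultant (A$2$1) (A$2$2 - A$1$1) (- A$1$2) (C$2$1) (C$2$2 - C$1$1) (- C$1$2) = 0"
    "quad_resultant (B$2$1) (B$2$2 - B$1$1) (- B$1$2) (C$2$1) (C$2$2 - C$1$1) (- C$1$2) = 0"
    using assms(1-3) by (simp_all add: sigma_eq_quad_resultant)
  have "Delta A B C = (A$2$1 * ((B$2$2 - B$1$1) * - C$1$2 - - B$1$2 * (C$2$2 - C$1$1))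
    - (A$2$2 - A$1$1) * (B$2$1 * - C$1$2 - - B$1$2 * C$2$1)
    + - A$1$2 * (B$2$1 * (C$2$2 - C$1$1) - (B$2$2 - B$1$1) * C$2$1))\<^sup>2"
    unfolding Delta_def trace_2 matrix_mult_2_nth by algebra
  then show "A$2$1 * ((B$2$2 - B$1$1) * - C$1$2 - - B$1$2 * (C$2$2 - C$1$1))
    - (A$2$2 - A$1$1) * (B$2$1 * - C$1$2 - - B$1$2 * C$2$1)
    + - A$1$2 * (B$2$1 * (C$2$2 - C$1$1) - (B$2$2 - B$1$1) * C$2$1) = 0"
    using assms(4) by simp
qed

lemma mult_cnj_add_mult_cnj_nonzero:
  fixes p q :: complex
  assumes "(p, q) \<noteq> (0, 0)"
  shows "p * cnj p + q * cnj q \<noteq> 0"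
proof -
  have "p * cnj p + q * cnj q = complex_of_real ((cmod p)\<^sup>2 + (cmod q)\<^sup>2)"
    using complex_norm_square[of p] complex_norm_square[of q] by simp
  moreover have "(cmod p)\<^sup>2 + (cmod q)\<^sup>2 > 0"
    using assms by (auto simp: add_pos_nonneg add_nonneg_pos)
  ultimately show ?thesis by (metis of_real_eq_0_iff order_less_irrefl)
qed

lemma upper_tri2_similar_iff_eigen_form:
  assumes "(p, q) \<noteq> (0, 0)"
  obtains P where "invertible P"
    and "\<And>A. upper_tri2 (P ** A ** matrix_inv P) \<longleftrightarrow> eigen_form A p q = 0"
proof -
  define d where "d = p * cnj p + q * cnj q"
  have "d \<noteq> 0" unfolding d_def using assms by (rule mult_cnj_add_mult_cnj_nonzero)
  \<comment> \<open>\<open>Q\<close> has first column \<open>v = (p, q)\<close>; the second column makes \<open>det Q = d = |p|\<^sup>2 + |q|\<^sup>2\<close>.\<close>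
  define Q :: cmat2 where "Q = vector [vector [p, - cnj q], vector [q, cnj p]]"
  define P :: cmat2 where "P = vector [vector [cnj p / d, cnj q / d], vector [- q / d, p / d]]"
  have "P ** Q = mat 1" "Q ** P = mat 1"
    using \<open>d \<noteq> 0\<close> unfolding P_def Q_def
    by (auto simp: vec_eq_iff forall_2 matrix_mult_2_nth mat_def field_simps)
      (simp_all add: d_def)
  then have "invertible P" "matrix_inv P = Q" by (rule matrix_inv_unique)+
  moreover have "(P ** A ** Q) $ 2 $ 1 = eigen_form A p q / d" for A
    using \<open>d \<noteq> 0\<close> unfolding P_def Q_def eigen_form_def quad_form_def
    by (simp add: matrix_mult_2_nth field_simps power2_eq_square)
  ultimately show ?thesis using \<open>d \<noteq> 0\<close> by (intro that) (auto simp: upper_tri2_def)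
qed

theorem corollary2p11:
  fixes A1 A2 A3 :: cmat2
  shows "(\<exists>B. similar3 (A1, A2, A3) B \<and> upper_tri3 B) \<longleftrightarrow>
    (sigma A1 A2 = 0 \<and> sigma A1 A3 = 0 \<and> sigma A2 A3 = 0 \<and> Delta A1 A2 A3 = 0)"
proof
  assume "\<exists>B. similar3 (A1, A2, A3) B \<and> upper_tri3 B"
  then obtain P where "invertible P" and "upper_tri2 (P ** A1 ** matrix_inv P)"
    "upper_tri2 (P ** A2 ** matrix_inv P)" "upper_tri2 (P ** A3 ** matrix_inv P)"
    unfolding similar3_def upper_tri3_def by auto
  then show "sigma A1 A2 = 0 \<and> sigma A1 A3 = 0 \<and> sigma A2 A3 = 0 \<and> Delta A1 A2 A3 = 0"
    by (metis sigma_similar Delta_similar sigma_upper_tri2 Delta_upper_tri2)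
next
  assume "sigma A1 A2 = 0 \<and> sigma A1 A3 = 0 \<and> sigma A2 A3 = 0 \<and> Delta A1 A2 A3 = 0"
  then obtain p q where "(p, q) \<noteq> (0, 0)"
    and "eigen_form A1 p q = 0" "eigen_form A2 p q = 0" "eigen_form A3 p q = 0"
    using eigen_forms_common_zero by blast
  moreover obtain P where "invertible P"
    and "\<And>A. upper_tri2 (P ** A ** matrix_inv P) \<longleftrightarrow> eigen_form A p q = 0"
    using upper_tri2_similar_iff_eigen_form[OF \<open>(p, q) \<noteq> (0, 0)\<close>] by blast
  ultimately show "\<exists>B. similar3 (A1, A2, A3) B \<and> upper_tri3 B"
    unfolding similar3_def upper_tri3_def
    by (intro exI[of _ "(P ** A1 ** matrix_inv P, P ** A2 ** matrix_inv P,
      P ** A3 ** matrix_inv P)"]) auto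
qed

end
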